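(* Let $\mathcal A$ be an abelian category with enough projective objects and $\mathcal C$ a resolving subcategory of $\mathcal A$. Let $G=(G^i,d^i_G)$ be an upper bounded acyclic complex with all $G^i\in\mathcal C$, and let $I=(I^i,d^i_I)$ be a bounded complex all of whose terms $I^i$ are injective objects of $\mathcal C$. Then $\operatorname{Hom}_{K^-(\mathcal A)}(G,I)=0$.
   Context: $\mathcal C$ is resolving if it contains all projective objects and is closed under extensions, direct summands and kernels of epimorphisms. An object $I\in\mathcal C$ is an injective object of $\mathcal C$ if $\operatorname{Ext}^1_{\mathcal A}(X,I)=0$ for all $X\in\mathcal C$. $K^-(\mathcal A)$ is the homotopy category of upper bounded complexes over $\mathcal A$. *)

theory Defs
  imports Main
begin

text \<open>An (abstract) preadditive category presented by a set of objects, hom-sets,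
  composition (cmp g f means g after f), identities, addition of parallel morphisms,
  zero morphisms and negation.\<close>

record ('o, 'm) cat =
  Ob  :: "'o set"
  Hom :: "'o \<Rightarrow> 'o \<Rightarrow> 'm set"
  cmp :: "'m \<Rightarrow> 'm \<Rightarrow> 'm"
  idm :: "'o \<Rightarrow> 'm"
  add :: "'m \<Rightarrow> 'm \<Rightarrow> 'm"
  zro :: "'o \<Rightarrow> 'o \<Rightarrow> 'm"
  ngt :: "'m \<Rightarrow> 'm"

definition is_category :: "('o, 'm, 'x) cat_scheme \<Rightarrow> bool" where
  "is_category C \<longleftrightarrow>
     (\<forall>A\<in>Ob C. \<forall>B\<in>Ob C. \<forall>D\<in>Ob C. \<forall>f\<in>Hom C A B. \<forall>g\<in>Hom C B D.
        cmp C g f \<in> Hom C A D) \<and>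
     (\<forall>A\<in>Ob C. \<forall>B\<in>Ob C. \<forall>D\<in>Ob C. \<forall>E\<in>Ob C.
        \<forall>f\<in>Hom C A B. \<forall>g\<in>Hom C B D. \<forall>h\<in>Hom C D E.
        cmp C h (cmp C g f) = cmp C (cmp C h g) f) \<and>
     (\<forall>A\<in>Ob C. idm C A \<in> Hom C A A) \<and>
     (\<forall>A\<in>Ob C. \<forall>B\<in>Ob C. \<forall>f\<in>Hom C A B.
        cmp C (idm C B) f = f \<and> cmp C f (idm C A) = f)"

definition is_preadditive :: "('o, 'm, 'x) cat_scheme \<Rightarrow> bool" where
  "is_preadditive C \<longleftrightarrow> is_category C \<and>
     (\<forall>A\<in>Ob C. \<forall>B\<in>Ob C.
        zro C A B \<in> Hom C A B \<and>
        (\<forall>f\<in>Hom C A B. \<forall>g\<in>Hom C A B. add C f g \<in> Hom C A B) \<and>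
        (\<forall>f\<in>Hom C A B. ngt C f \<in> Hom C A B) \<and>
        (\<forall>f\<in>Hom C A B. \<forall>g\<in>Hom C A B. \<forall>h\<in>Hom C A B.
           add C (add C f g) h = add C f (add C g h)) \<and>
        (\<forall>f\<in>Hom C A B. \<forall>g\<in>Hom C A B. add C f g = add C g f) \<and>
        (\<forall>f\<in>Hom C A B. add C f (zro C A B) = f) \<and>
        (\<forall>f\<in>Hom C A B. add C f (ngt C f) = zro C A B)) \<and>
     (\<forall>A\<in>Ob C. \<forall>B\<in>Ob C. \<forall>D\<in>Ob C.
        (\<forall>f\<in>Hom C A B. \<forall>g\<in>Hom C A B. \<forall>h\<in>Hom C B D.
           cmp C h (add C f g) = add C (cmp C h f) (cmp C h g)) \<and>
        (\<forall>f\<in>Hom C A B. \<forall>g\<in>Hom C B D. \<forall>h\<in>Hom C B D.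
           cmp C (add C g h) f = add C (cmp C g f) (cmp C h f)))"

definition is_zero_obj :: "('o, 'm, 'x) cat_scheme \<Rightarrow> 'o \<Rightarrow> bool" where
  "is_zero_obj C Z \<longleftrightarrow> Z \<in> Ob C \<and>
     (\<forall>A\<in>Ob C. (\<exists>!f. f \<in> Hom C A Z) \<and> (\<exists>!f. f \<in> Hom C Z A))"

definition is_biproduct ::
  "('o, 'm, 'x) cat_scheme \<Rightarrow> 'o \<Rightarrow> 'o \<Rightarrow> 'o \<Rightarrow> 'm \<Rightarrow> 'm \<Rightarrow> 'm \<Rightarrow> 'm \<Rightarrow> bool" where
  "is_biproduct C A B S i1 i2 p1 p2 \<longleftrightarrow> S \<in> Ob C \<and>
     i1 \<in> Hom C A S \<and> i2 \<in> Hom C B S \<and> p1 \<in> Hom C S A \<and> p2 \<in> Hom C S B \<and>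
     cmp C p1 i1 = idm C A \<and> cmp C p2 i2 = idm C B \<and>
     cmp C p1 i2 = zro C B A \<and> cmp C p2 i1 = zro C A B \<and>
     add C (cmp C i1 p1) (cmp C i2 p2) = idm C S"

definition is_mono :: "('o, 'm, 'x) cat_scheme \<Rightarrow> 'o \<Rightarrow> 'o \<Rightarrow> 'm \<Rightarrow> bool" where
  "is_mono C A B m \<longleftrightarrow> m \<in> Hom C A B \<and>
     (\<forall>X\<in>Ob C. \<forall>g\<in>Hom C X A. \<forall>h\<in>Hom C X A. cmp C m g = cmp C m h \<longrightarrow> g = h)"

definition is_epi :: "('o, 'm, 'x) cat_scheme \<Rightarrow> 'o \<Rightarrow> 'o \<Rightarrow> 'm \<Rightarrow> bool" where
  "is_epi C A B e \<longleftrightarrow> e \<in> Hom C A B \<and>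
     (\<forall>X\<in>Ob C. \<forall>g\<in>Hom C B X. \<forall>h\<in>Hom C B X. cmp C g e = cmp C h e \<longrightarrow> g = h)"

definition is_kernel ::
  "('o, 'm, 'x) cat_scheme \<Rightarrow> 'o \<Rightarrow> 'o \<Rightarrow> 'm \<Rightarrow> 'o \<Rightarrow> 'm \<Rightarrow> bool" where
  "is_kernel C A B f K k \<longleftrightarrow> f \<in> Hom C A B \<and> K \<in> Ob C \<and> k \<in> Hom C K A \<and>
     cmp C f k = zro C K B \<and>
     (\<forall>X\<in>Ob C. \<forall>h\<in>Hom C X A. cmp C f h = zro C X B \<longrightarrow>
        (\<exists>!u. u \<in> Hom C X K \<and> cmp C k u = h))"

definition is_cokernel ::
  "('o, 'm, 'x) cat_scheme \<Rightarrow> 'o \<Rightarrow> 'o \<Rightarrow> 'm \<Rightarrow> 'o \<Rightarrow> 'm \<Rightarrow> bool" where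
  "is_cokernel C A B f Q q \<longleftrightarrow> f \<in> Hom C A B \<and> Q \<in> Ob C \<and> q \<in> Hom C B Q \<and>
     cmp C q f = zro C A Q \<and>
     (\<forall>Y\<in>Ob C. \<forall>h\<in>Hom C B Y. cmp C h f = zro C A Y \<longrightarrow>
        (\<exists>!u. u \<in> Hom C Q Y \<and> cmp C u q = h))"

definition is_abelian :: "('o, 'm, 'x) cat_scheme \<Rightarrow> bool" where
  "is_abelian C \<longleftrightarrow> is_preadditive C \<and>
     (\<exists>Z. is_zero_obj C Z) \<and>
     (\<forall>A\<in>Ob C. \<forall>B\<in>Ob C. \<exists>S i1 i2 p1 p2. is_biproduct C A B S i1 i2 p1 p2) \<and>
     (\<forall>A\<in>Ob C. \<forall>B\<in>Ob C. \<forall>f\<in>Hom C A B.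
        (\<exists>K k. is_kernel C A B f K k) \<and> (\<exists>Q q. is_cokernel C A B f Q q)) \<and>
     (\<forall>A\<in>Ob C. \<forall>B\<in>Ob C. \<forall>m. is_mono C A B m \<longrightarrow>
        (\<exists>D\<in>Ob C. \<exists>g\<in>Hom C B D. is_kernel C B D g A m)) \<and>
     (\<forall>A\<in>Ob C. \<forall>B\<in>Ob C. \<forall>e. is_epi C A B e \<longrightarrow>
        (\<exists>D\<in>Ob C. \<exists>g\<in>Hom C D A. is_cokernel C D A g B e))"

definition is_exact ::
  "('o, 'm, 'x) cat_scheme \<Rightarrow> 'o \<Rightarrow> 'o \<Rightarrow> 'o \<Rightarrow> 'm \<Rightarrow> 'm \<Rightarrow> bool" where
  "is_exact C A B D f g \<longleftrightarrow> f \<in> Hom C A B \<and> g \<in> Hom C B D \<and>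
     cmp C g f = zro C A D \<and>
     (\<forall>K k Q q. is_kernel C B D g K k \<and> is_cokernel C A B f Q q \<longrightarrow>
        cmp C q k = zro C K Q)"

definition short_exact ::
  "('o, 'm, 'x) cat_scheme \<Rightarrow> 'o \<Rightarrow> 'o \<Rightarrow> 'o \<Rightarrow> 'm \<Rightarrow> 'm \<Rightarrow> bool" where
  "short_exact C A B D f g \<longleftrightarrow> A \<in> Ob C \<and> B \<in> Ob C \<and> D \<in> Ob C \<and>
     is_mono C A B f \<and> is_epi C B D g \<and> is_exact C A B D f g"

definition is_projective :: "('o, 'm, 'x) cat_scheme \<Rightarrow> 'o \<Rightarrow> bool" where
  "is_projective C P \<longleftrightarrow> P \<in> Ob C \<and>
     (\<forall>X\<in>Ob C. \<forall>Y\<in>Ob C. \<forall>e h. is_epi C X Y e \<and> h \<in> Hom C P Y \<longrightarrow>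
        (\<exists>h'\<in>Hom C P X. cmp C e h' = h))"

definition enough_projectives :: "('o, 'm, 'x) cat_scheme \<Rightarrow> bool" where
  "enough_projectives C \<longleftrightarrow>
     (\<forall>X\<in>Ob C. \<exists>P e. is_projective C P \<and> is_epi C P X e)"

text \<open>Resolving (full) subcategory, given by its class of objects S.\<close>
definition resolving :: "('o, 'm, 'x) cat_scheme \<Rightarrow> 'o set \<Rightarrow> bool" where
  "resolving C S \<longleftrightarrow> S \<subseteq> Ob C \<and>
     (\<forall>P. is_projective C P \<longrightarrow> P \<in> S) \<and>
     (\<forall>A B D f g. short_exact C A B D f g \<and> A \<in> S \<and> D \<in> S \<longrightarrow> B \<in> S) \<and>
     (\<forall>A A' B i1 i2 p1 p2. is_biproduct C A A' B i1 i2 p1 p2 \<and> A \<in> Ob C \<and> A' \<in> Ob C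
        \<and> B \<in> S \<longrightarrow> A \<in> S) \<and>
     (\<forall>A B D f g. short_exact C A B D f g \<and> B \<in> S \<and> D \<in> S \<longrightarrow> A \<in> S)"

text \<open>Ext^1(X, I) = 0 (Yoneda Ext): every extension 0 \<rightarrow> I \<rightarrow> E \<rightarrow> X \<rightarrow> 0 splits.\<close>
definition ext1_zero :: "('o, 'm, 'x) cat_scheme \<Rightarrow> 'o \<Rightarrow> 'o \<Rightarrow> bool" where
  "ext1_zero C X I \<longleftrightarrow>
     (\<forall>E f g. short_exact C I E X f g \<longrightarrow> (\<exists>r\<in>Hom C E I. cmp C r f = idm C I))"

definition injective_in :: "('o, 'm, 'x) cat_scheme \<Rightarrow> 'o set \<Rightarrow> 'o \<Rightarrow> bool" where
  "injective_in C S I \<longleftrightarrow> I \<in> S \<and> (\<forall>X\<in>S. ext1_zero C X I)"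

definition is_complex :: "('o, 'm, 'x) cat_scheme \<Rightarrow> (int \<Rightarrow> 'o) \<Rightarrow> (int \<Rightarrow> 'm) \<Rightarrow> bool" where
  "is_complex C X d \<longleftrightarrow>
     (\<forall>i. X i \<in> Ob C \<and> d i \<in> Hom C (X i) (X (i + 1)) \<and>
          cmp C (d (i + 1)) (d i) = zro C (X i) (X (i + 2)))"

definition upper_bounded :: "('o, 'm, 'x) cat_scheme \<Rightarrow> (int \<Rightarrow> 'o) \<Rightarrow> bool" where
  "upper_bounded C X \<longleftrightarrow> (\<exists>n. \<forall>i\<ge>n. is_zero_obj C (X i))"

definition bounded_cx :: "('o, 'm, 'x) cat_scheme \<Rightarrow> (int \<Rightarrow> 'o) \<Rightarrow> bool" where
  "bounded_cx C X \<longleftrightarrow> (\<exists>m n. \<forall>i. (i \<le> m \<or> i \<ge> n) \<longrightarrow> is_zero_obj C (X i))"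

definition acyclic_cx :: "('o, 'm, 'x) cat_scheme \<Rightarrow> (int \<Rightarrow> 'o) \<Rightarrow> (int \<Rightarrow> 'm) \<Rightarrow> bool" where
  "acyclic_cx C X d \<longleftrightarrow>
     (\<forall>i. is_exact C (X (i - 1)) (X i) (X (i + 1)) (d (i - 1)) (d i))"

definition chain_map ::
  "('o, 'm, 'x) cat_scheme \<Rightarrow> (int \<Rightarrow> 'o) \<Rightarrow> (int \<Rightarrow> 'm) \<Rightarrow> (int \<Rightarrow> 'o) \<Rightarrow> (int \<Rightarrow> 'm)
   \<Rightarrow> (int \<Rightarrow> 'm) \<Rightarrow> bool" where
  "chain_map C X dX Y dY f \<longleftrightarrow>
     (\<forall>i. f i \<in> Hom C (X i) (Y i) \<and> cmp C (dY i) (f i) = cmp C (f (i + 1)) (dX i))"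

definition null_homotopic ::
  "('o, 'm, 'x) cat_scheme \<Rightarrow> (int \<Rightarrow> 'o) \<Rightarrow> (int \<Rightarrow> 'm) \<Rightarrow> (int \<Rightarrow> 'o) \<Rightarrow> (int \<Rightarrow> 'm)
   \<Rightarrow> (int \<Rightarrow> 'm) \<Rightarrow> bool" where
  "null_homotopic C X dX Y dY f \<longleftrightarrow>
     (\<exists>s. \<forall>i. s i \<in> Hom C (X i) (Y (i - 1)) \<and>
        f i = add C (cmp C (dY (i - 1)) (s i)) (cmp C (s (i + 1)) (dX i)))"

text \<open>Hom_{K(A)}((X,dX),(Y,dY)) = 0: every chain map is null-homotopic.
  (K^-(A) is a full subcategory of K(A).)\<close>
definition homK_zero ::
  "('o, 'm, 'x) cat_scheme \<Rightarrow> (int \<Rightarrow> 'o) \<Rightarrow> (int \<Rightarrow> 'm) \<Rightarrow> (int \<Rightarrow> 'o) \<Rightarrow> (int \<Rightarrow> 'm) \<Rightarrow> bool" where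
  "homK_zero C X dX Y dY \<longleftrightarrow>
     (\<forall>f. chain_map C X dX Y dY f \<longrightarrow> null_homotopic C X dX Y dY f)"

end

theory Submission
  imports Defs
begin

(* Let Z i \<subseteq> G (i + 1) be the image of dG i. As G is acyclic, 0 \<rightarrow> Z (i - 1) \<rightarrow> G i \<rightarrow> Z i \<rightarrow> 0 is
   exact, so descending induction from the degrees where G vanishes puts every Z i into the
   resolving subcategory (closure under kernels of epimorphisms). A chain map f : G \<rightarrow> I is then
   null-homotopic via s i : G i \<rightarrow> I (i - 1) constructed upwards from a degree below which I
   vanishes: the defect f i - dI (i - 1) \<cdot> s i kills the image of dG (i - 1), so it factors
   through G i \<rightarrow> Z i, and it extends along Z i \<rightarrow> G (i + 1) since Ext\<^sup>1(Z (i + 1), I i) = 0;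
   the extension is s (i + 1). *)

locale preadditive_cat =
  fixes C :: "('o, 'm, 'x) cat_scheme"
  assumes preadditive: "is_preadditive C"
begin

abbreviation comp_hom (infixr "\<cdot>" 70) where "g \<cdot> f \<equiv> cmp C g f"
abbreviation add_hom (infixl "\<oplus>" 65) where "f \<oplus> g \<equiv> add C f g"
abbreviation neg_hom ("\<ominus> _" [81] 80) where "\<ominus> f \<equiv> ngt C f"
abbreviation zero_hom ("\<zero>\<^bsub>_,_\<^esub>") where "\<zero>\<^bsub>A,B\<^esub> \<equiv> zro C A B"
abbreviation hom where "hom A B \<equiv> Hom C A B"

lemma category: "is_category C"
  using preadditive unfolding is_preadditive_def by auto

lemma comp_closed:
  "A \<in> Ob C \<Longrightarrow> B \<in> Ob C \<Longrightarrow> D \<in> Ob C \<Longrightarrow> f \<in> hom A B \<Longrightarrow> g \<in> hom B D \<Longrightarrow> g \<cdot> f \<in> hom A D"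
  using category unfolding is_category_def by blast

lemma comp_assoc:
  "A \<in> Ob C \<Longrightarrow> B \<in> Ob C \<Longrightarrow> D \<in> Ob C \<Longrightarrow> E \<in> Ob C \<Longrightarrow>
    f \<in> hom A B \<Longrightarrow> g \<in> hom B D \<Longrightarrow> h \<in> hom D E \<Longrightarrow> h \<cdot> (g \<cdot> f) = (h \<cdot> g) \<cdot> f"
  using category unfolding is_category_def by blast

lemma id_closed: "A \<in> Ob C \<Longrightarrow> idm C A \<in> hom A A"
  using category unfolding is_category_def by blast

lemma comp_id_left: "A \<in> Ob C \<Longrightarrow> B \<in> Ob C \<Longrightarrow> f \<in> hom A B \<Longrightarrow> idm C B \<cdot> f = f"
  using category unfolding is_category_def by blast

lemma comp_id_right: "A \<in> Ob C \<Longrightarrow> B \<in> Ob C \<Longrightarrow> f \<in> hom A B \<Longrightarrow> f \<cdot> idm C A = f"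
  using category unfolding is_category_def by blast

lemma zero_closed: "A \<in> Ob C \<Longrightarrow> B \<in> Ob C \<Longrightarrow> \<zero>\<^bsub>A,B\<^esub> \<in> hom A B"
  using preadditive unfolding is_preadditive_def by blast

lemma add_closed: "A \<in> Ob C \<Longrightarrow> B \<in> Ob C \<Longrightarrow> f \<in> hom A B \<Longrightarrow> g \<in> hom A B \<Longrightarrow> f \<oplus> g \<in> hom A B"
  using preadditive unfolding is_preadditive_def by blast

lemma neg_closed: "A \<in> Ob C \<Longrightarrow> B \<in> Ob C \<Longrightarrow> f \<in> hom A B \<Longrightarrow> \<ominus> f \<in> hom A B"
  using preadditive unfolding is_preadditive_def by blast

lemma add_assoc:
  "A \<in> Ob C \<Longrightarrow> B \<in> Ob C \<Longrightarrow> f \<in> hom A B \<Longrightarrow> g \<in> hom A B \<Longrightarrow> h \<in> hom A B \<Longrightarrow>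
    (f \<oplus> g) \<oplus> h = f \<oplus> (g \<oplus> h)"
  using preadditive unfolding is_preadditive_def by blast

lemma add_commute: "A \<in> Ob C \<Longrightarrow> B \<in> Ob C \<Longrightarrow> f \<in> hom A B \<Longrightarrow> g \<in> hom A B \<Longrightarrow> f \<oplus> g = g \<oplus> f"
  using preadditive unfolding is_preadditive_def by blast

lemma add_zero: "A \<in> Ob C \<Longrightarrow> B \<in> Ob C \<Longrightarrow> f \<in> hom A B \<Longrightarrow> f \<oplus> \<zero>\<^bsub>A,B\<^esub> = f"
  using preadditive unfolding is_preadditive_def by blast

lemma add_neg: "A \<in> Ob C \<Longrightarrow> B \<in> Ob C \<Longrightarrow> f \<in> hom A B \<Longrightarrow> f \<oplus> (\<ominus> f) = \<zero>\<^bsub>A,B\<^esub>"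
  using preadditive unfolding is_preadditive_def by blast

lemma comp_add_right:
  "A \<in> Ob C \<Longrightarrow> B \<in> Ob C \<Longrightarrow> D \<in> Ob C \<Longrightarrow> f \<in> hom A B \<Longrightarrow> g \<in> hom A B \<Longrightarrow> h \<in> hom B D \<Longrightarrow>
    h \<cdot> (f \<oplus> g) = (h \<cdot> f) \<oplus> (h \<cdot> g)"
  using preadditive unfolding is_preadditive_def by blast

lemma comp_add_left:
  assumes "A \<in> Ob C" "B \<in> Ob C" "D \<in> Ob C" "f \<in> hom A B" "g \<in> hom B D" "h \<in> hom B D"
  shows "(g \<oplus> h) \<cdot> f = (g \<cdot> f) \<oplus> (h \<cdot> f)"
proof -
  have "\<forall>A\<in>Ob C. \<forall>B\<in>Ob C. \<forall>D\<in>Ob C. \<forall>f\<in>hom A B. \<forall>g\<in>hom B D. \<forall>h\<in>hom B D.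
          (g \<oplus> h) \<cdot> f = (g \<cdot> f) \<oplus> (h \<cdot> f)"
    using preadditive unfolding is_preadditive_def by auto
  then show ?thesis using assms by blast
qed

lemma zero_add: "A \<in> Ob C \<Longrightarrow> B \<in> Ob C \<Longrightarrow> f \<in> hom A B \<Longrightarrow> \<zero>\<^bsub>A,B\<^esub> \<oplus> f = f"
  using add_commute[of A B f "\<zero>\<^bsub>A,B\<^esub>"] by (simp add: add_zero zero_closed)

lemma neg_add: "A \<in> Ob C \<Longrightarrow> B \<in> Ob C \<Longrightarrow> f \<in> hom A B \<Longrightarrow> (\<ominus> f) \<oplus> f = \<zero>\<^bsub>A,B\<^esub>"
  using add_commute[of A B f "\<ominus> f"] by (simp add: add_neg neg_closed)

lemma add_left_cancel:
  assumes "A \<in> Ob C" "B \<in> Ob C" "f \<in> hom A B" "g \<in> hom A B" "h \<in> hom A B" "f \<oplus> g = f \<oplus> h"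
  shows "g = h"
proof -
  have "g = ((\<ominus> f) \<oplus> f) \<oplus> g" using assms by (simp add: neg_add zero_add)
  also have "\<dots> = (\<ominus> f) \<oplus> (f \<oplus> h)" using assms by (simp add: add_assoc neg_closed)
  also have "\<dots> = h" using assms by (simp add: add_assoc[symmetric] neg_closed neg_add zero_add)
  finally show ?thesis .
qed

lemma comp_zero_right:
  assumes "A \<in> Ob C" "B \<in> Ob C" "D \<in> Ob C" "g \<in> hom B D"
  shows "g \<cdot> \<zero>\<^bsub>A,B\<^esub> = \<zero>\<^bsub>A,D\<^esub>"
proof -
  have "(g \<cdot> \<zero>\<^bsub>A,B\<^esub>) \<oplus> \<zero>\<^bsub>A,D\<^esub> = (g \<cdot> \<zero>\<^bsub>A,B\<^esub>) \<oplus> (g \<cdot> \<zero>\<^bsub>A,B\<^esub>)"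
    using assms comp_add_right[of A B D "\<zero>\<^bsub>A,B\<^esub>" "\<zero>\<^bsub>A,B\<^esub>" g]
    by (simp add: add_zero comp_closed zero_closed)
  then show ?thesis using assms add_left_cancel by (metis comp_closed zero_closed)
qed

lemma comp_zero_left:
  assumes "A \<in> Ob C" "B \<in> Ob C" "D \<in> Ob C" "f \<in> hom A B"
  shows "\<zero>\<^bsub>B,D\<^esub> \<cdot> f = \<zero>\<^bsub>A,D\<^esub>"
proof -
  have "(\<zero>\<^bsub>B,D\<^esub> \<cdot> f) \<oplus> \<zero>\<^bsub>A,D\<^esub> = (\<zero>\<^bsub>B,D\<^esub> \<cdot> f) \<oplus> (\<zero>\<^bsub>B,D\<^esub> \<cdot> f)"
    using assms comp_add_left[of A B D f "\<zero>\<^bsub>B,D\<^esub>" "\<zero>\<^bsub>B,D\<^esub>"]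
    by (simp add: add_zero comp_closed zero_closed)
  then show ?thesis using assms add_left_cancel by (metis comp_closed zero_closed)
qed

lemma neg_zero: "A \<in> Ob C \<Longrightarrow> B \<in> Ob C \<Longrightarrow> \<ominus> \<zero>\<^bsub>A,B\<^esub> = \<zero>\<^bsub>A,B\<^esub>"
  using add_neg[of A B "\<zero>\<^bsub>A,B\<^esub>"] by (simp add: zero_add neg_closed zero_closed)

lemma comp_neg_right:
  assumes "A \<in> Ob C" "B \<in> Ob C" "D \<in> Ob C" "f \<in> hom A B" "h \<in> hom B D"
  shows "h \<cdot> (\<ominus> f) = \<ominus> (h \<cdot> f)"
proof -
  have "(h \<cdot> f) \<oplus> (h \<cdot> (\<ominus> f)) = h \<cdot> (f \<oplus> \<ominus> f)" using assms by (simp add: comp_add_right neg_closed)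
  also have "\<dots> = (h \<cdot> f) \<oplus> \<ominus> (h \<cdot> f)" using assms by (simp add: add_neg comp_zero_right comp_closed)
  finally show ?thesis using assms add_left_cancel by (metis comp_closed neg_closed)
qed

lemma comp_neg_left:
  assumes "A \<in> Ob C" "B \<in> Ob C" "D \<in> Ob C" "f \<in> hom A B" "h \<in> hom B D"
  shows "(\<ominus> h) \<cdot> f = \<ominus> (h \<cdot> f)"
proof -
  have "(h \<cdot> f) \<oplus> ((\<ominus> h) \<cdot> f) = (h \<oplus> \<ominus> h) \<cdot> f" using assms by (simp add: comp_add_left neg_closed)
  also have "\<dots> = (h \<cdot> f) \<oplus> \<ominus> (h \<cdot> f)" using assms by (simp add: add_neg comp_zero_left comp_closed)
  finally show ?thesis using assms add_left_cancel by (metis comp_closed neg_closed)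
qed

lemma eq_if_diff_zero:
  assumes "A \<in> Ob C" "B \<in> Ob C" "f \<in> hom A B" "g \<in> hom A B" "f \<oplus> (\<ominus> g) = \<zero>\<^bsub>A,B\<^esub>"
  shows "f = g"
proof -
  have "f = f \<oplus> ((\<ominus> g) \<oplus> g)" using assms by (simp add: neg_add add_zero)
  also have "\<dots> = (f \<oplus> (\<ominus> g)) \<oplus> g" using assms(1-4) by (simp add: add_assoc neg_closed)
  finally show ?thesis using assms by (simp add: zero_add)
qed

lemma add_diff_cancel_left:
  assumes "A \<in> Ob C" "B \<in> Ob C" "f \<in> hom A B" "g \<in> hom A B"
  shows "f \<oplus> (g \<oplus> \<ominus> f) = g"
proof -
  have "f \<oplus> (g \<oplus> \<ominus> f) = f \<oplus> ((\<ominus> f) \<oplus> g)" using assms by (simp add: add_commute neg_closed)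
  also have "\<dots> = g" using assms by (simp add: add_assoc[symmetric] add_neg zero_add neg_closed)
  finally show ?thesis .
qed

lemma mono_hom: "is_mono C A B m \<Longrightarrow> m \<in> hom A B"
  unfolding is_mono_def by simp

lemma epi_hom: "is_epi C A B e \<Longrightarrow> e \<in> hom A B"
  unfolding is_epi_def by simp

lemma mono_cancel:
  "is_mono C A B m \<Longrightarrow> X \<in> Ob C \<Longrightarrow> g \<in> hom X A \<Longrightarrow> h \<in> hom X A \<Longrightarrow> m \<cdot> g = m \<cdot> h \<Longrightarrow> g = h"
  unfolding is_mono_def by blast

lemma epi_cancel:
  "is_epi C A B e \<Longrightarrow> Y \<in> Ob C \<Longrightarrow> g \<in> hom B Y \<Longrightarrow> h \<in> hom B Y \<Longrightarrow> g \<cdot> e = h \<cdot> e \<Longrightarrow> g = h"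
  unfolding is_epi_def by blast

lemma mono_cancel_zero:
  assumes "A \<in> Ob C" "B \<in> Ob C" "X \<in> Ob C" "is_mono C A B m" "g \<in> hom X A" "m \<cdot> g = \<zero>\<^bsub>X,B\<^esub>"
  shows "g = \<zero>\<^bsub>X,A\<^esub>"
  using assms mono_cancel[of A B m X g "\<zero>\<^bsub>X,A\<^esub>"] by (simp add: comp_zero_right mono_hom zero_closed)

lemma epi_cancel_zero:
  assumes "A \<in> Ob C" "B \<in> Ob C" "Y \<in> Ob C" "is_epi C A B e" "g \<in> hom B Y" "g \<cdot> e = \<zero>\<^bsub>A,Y\<^esub>"
  shows "g = \<zero>\<^bsub>B,Y\<^esub>"
  using assms epi_cancel[of A B e Y g "\<zero>\<^bsub>B,Y\<^esub>"] by (simp add: comp_zero_left epi_hom zero_closed)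

lemma monoI:
  assumes A: "A \<in> Ob C" and B: "B \<in> Ob C" and m: "m \<in> hom A B"
    and zero: "\<And>X g. X \<in> Ob C \<Longrightarrow> g \<in> hom X A \<Longrightarrow> m \<cdot> g = \<zero>\<^bsub>X,B\<^esub> \<Longrightarrow> g = \<zero>\<^bsub>X,A\<^esub>"
  shows "is_mono C A B m"
  unfolding is_mono_def
proof (intro conjI ballI impI)
  fix X g h assume X: "X \<in> Ob C" and g: "g \<in> hom X A" and h: "h \<in> hom X A" and eq: "m \<cdot> g = m \<cdot> h"
  have nh: "\<ominus> h \<in> hom X A" using neg_closed X A h by blast
  have "m \<cdot> (g \<oplus> \<ominus> h) = (m \<cdot> h) \<oplus> \<ominus> (m \<cdot> h)"
    using comp_add_right[OF X A B g nh m] eq comp_neg_right[OF X A B h m] by simp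
  also have "\<dots> = \<zero>\<^bsub>X,B\<^esub>" using add_neg[OF X B] comp_closed[OF X A B h m] by blast
  finally have "g \<oplus> \<ominus> h = \<zero>\<^bsub>X,A\<^esub>" using zero[OF X] add_closed[OF X A g nh] by blast
  then show "g = h" using eq_if_diff_zero[OF X A g h] by blast
qed (fact m)

lemma epiI:
  assumes A: "A \<in> Ob C" and B: "B \<in> Ob C" and e: "e \<in> hom A B"
    and zero: "\<And>Y g. Y \<in> Ob C \<Longrightarrow> g \<in> hom B Y \<Longrightarrow> g \<cdot> e = \<zero>\<^bsub>A,Y\<^esub> \<Longrightarrow> g = \<zero>\<^bsub>B,Y\<^esub>"
  shows "is_epi C A B e"
  unfolding is_epi_def
proof (intro conjI ballI impI)
  fix Y g h assume Y: "Y \<in> Ob C" and g: "g \<in> hom B Y" and h: "h \<in> hom B Y" and eq: "g \<cdot> e = h \<cdot> e"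
  have nh: "\<ominus> h \<in> hom B Y" using neg_closed Y B h by blast
  have "(g \<oplus> \<ominus> h) \<cdot> e = (h \<cdot> e) \<oplus> \<ominus> (h \<cdot> e)"
    using comp_add_left[OF A B Y e g nh] eq comp_neg_left[OF A B Y e h] by simp
  also have "\<dots> = \<zero>\<^bsub>A,Y\<^esub>" using add_neg[OF A Y] comp_closed[OF A B Y e h] by blast
  finally have "g \<oplus> \<ominus> h = \<zero>\<^bsub>B,Y\<^esub>" using zero[OF Y] add_closed[OF B Y g nh] by blast
  then show "g = h" using eq_if_diff_zero[OF B Y g h] by blast
qed (fact e)

lemma mono_comp:
  assumes A: "A \<in> Ob C" and B: "B \<in> Ob C" and D: "D \<in> Ob C"
    and m: "is_mono C A B m" and n: "is_mono C B D n"
  shows "is_mono C A D (n \<cdot> m)"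
proof (rule monoI[OF A D comp_closed[OF A B D mono_hom[OF m] mono_hom[OF n]]])
  fix X g assume X: "X \<in> Ob C" and g: "g \<in> hom X A" and z: "(n \<cdot> m) \<cdot> g = \<zero>\<^bsub>X,D\<^esub>"
  have "n \<cdot> (m \<cdot> g) = \<zero>\<^bsub>X,D\<^esub>" using z comp_assoc[OF X A B D g mono_hom[OF m] mono_hom[OF n]] by simp
  then have "m \<cdot> g = \<zero>\<^bsub>X,B\<^esub>" using mono_cancel_zero[OF B D X n comp_closed[OF X A B g mono_hom[OF m]]] by blast
  then show "g = \<zero>\<^bsub>X,A\<^esub>" using mono_cancel_zero[OF A B X m g] by blast
qed

lemma kernelD:
  assumes "is_kernel C A B f K k"
  shows "f \<in> hom A B" "K \<in> Ob C" "k \<in> hom K A" "f \<cdot> k = \<zero>\<^bsub>K,B\<^esub>"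
  using assms unfolding is_kernel_def by simp_all

lemma kernel_factor:
  assumes "is_kernel C A B f K k" "X \<in> Ob C" "h \<in> hom X A" "f \<cdot> h = \<zero>\<^bsub>X,B\<^esub>"
  shows "\<exists>!u. u \<in> hom X K \<and> k \<cdot> u = h"
  using assms unfolding is_kernel_def by blast

lemma cokernelD:
  assumes "is_cokernel C A B f Q q"
  shows "f \<in> hom A B" "Q \<in> Ob C" "q \<in> hom B Q" "q \<cdot> f = \<zero>\<^bsub>A,Q\<^esub>"
  using assms unfolding is_cokernel_def by simp_all

lemma cokernel_factor:
  assumes "is_cokernel C A B f Q q" "Y \<in> Ob C" "h \<in> hom B Y" "h \<cdot> f = \<zero>\<^bsub>A,Y\<^esub>"
  shows "\<exists>!u. u \<in> hom Q Y \<and> u \<cdot> q = h"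
  using assms unfolding is_cokernel_def by blast

lemma kernel_is_mono:
  assumes A: "A \<in> Ob C" and B: "B \<in> Ob C" and ker: "is_kernel C A B f K k"
  shows "is_mono C K A k"
proof -
  note kd = kernelD[OF ker]
  show ?thesis
  proof (rule monoI[OF kd(2) A kd(3)])
    fix X g assume X: "X \<in> Ob C" and g: "g \<in> hom X K" and z: "k \<cdot> g = \<zero>\<^bsub>X,A\<^esub>"
    have "f \<cdot> \<zero>\<^bsub>X,A\<^esub> = \<zero>\<^bsub>X,B\<^esub>" using comp_zero_right[OF X A B kd(1)] .
    then have "\<exists>!u. u \<in> hom X K \<and> k \<cdot> u = \<zero>\<^bsub>X,A\<^esub>"
      using kernel_factor[OF ker X zero_closed[OF X A]] by simp
    moreover have "k \<cdot> \<zero>\<^bsub>X,K\<^esub> = \<zero>\<^bsub>X,A\<^esub>" using comp_zero_right[OF X kd(2) A kd(3)] .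
    ultimately show "g = \<zero>\<^bsub>X,K\<^esub>" using g z zero_closed[OF X kd(2)] by blast
  qed
qed

lemma cokernel_is_epi:
  assumes A: "A \<in> Ob C" and B: "B \<in> Ob C" and cok: "is_cokernel C A B f Q q"
  shows "is_epi C B Q q"
proof -
  note cd = cokernelD[OF cok]
  show ?thesis
  proof (rule epiI[OF B cd(2) cd(3)])
    fix Y g assume Y: "Y \<in> Ob C" and g: "g \<in> hom Q Y" and z: "g \<cdot> q = \<zero>\<^bsub>B,Y\<^esub>"
    have "\<zero>\<^bsub>B,Y\<^esub> \<cdot> f = \<zero>\<^bsub>A,Y\<^esub>" using comp_zero_left[OF A B Y cd(1)] .
    then have "\<exists>!u. u \<in> hom Q Y \<and> u \<cdot> q = \<zero>\<^bsub>B,Y\<^esub>"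
      using cokernel_factor[OF cok Y zero_closed[OF B Y]] by simp
    moreover have "\<zero>\<^bsub>Q,Y\<^esub> \<cdot> q = \<zero>\<^bsub>B,Y\<^esub>" using comp_zero_left[OF B cd(2) Y cd(3)] .
    ultimately show "g = \<zero>\<^bsub>Q,Y\<^esub>" using g z zero_closed[OF cd(2) Y] by blast
  qed
qed

lemma kernel_comp_mono:
  assumes A: "A \<in> Ob C" and I: "I \<in> Ob C" and B: "B \<in> Ob C"
    and ker: "is_kernel C A I e K k" and m: "is_mono C I B m"
  shows "is_kernel C A B (m \<cdot> e) K k"
  unfolding is_kernel_def
proof (intro conjI ballI impI)
  note kd = kernelD[OF ker]
  have m': "m \<in> hom I B" using mono_hom[OF m] .
  show "m \<cdot> e \<in> hom A B" using comp_closed[OF A I B kd(1) m'] .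
  show "K \<in> Ob C" "k \<in> hom K A" using kd by simp_all
  show "(m \<cdot> e) \<cdot> k = \<zero>\<^bsub>K,B\<^esub>"
    using comp_assoc[OF kd(2) A I B kd(3) kd(1) m'] kd(4) comp_zero_right[OF kd(2) I B m'] by simp
  fix X h assume X: "X \<in> Ob C" and h: "h \<in> hom X A" and z: "(m \<cdot> e) \<cdot> h = \<zero>\<^bsub>X,B\<^esub>"
  have "m \<cdot> (e \<cdot> h) = \<zero>\<^bsub>X,B\<^esub>" using z comp_assoc[OF X A I B h kd(1) m'] by simp
  then have "e \<cdot> h = \<zero>\<^bsub>X,I\<^esub>" using mono_cancel_zero[OF I B X m comp_closed[OF X A I h kd(1)]] by blast
  then show "\<exists>!u. u \<in> hom X K \<and> k \<cdot> u = h" using kernel_factor[OF ker X h] by simp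
qed

lemma cokernel_comp_epi:
  assumes A: "A \<in> Ob C" and I: "I \<in> Ob C" and B: "B \<in> Ob C"
    and cok: "is_cokernel C I B m Q q" and e: "is_epi C A I e"
  shows "is_cokernel C A B (m \<cdot> e) Q q"
  unfolding is_cokernel_def
proof (intro conjI ballI impI)
  note cd = cokernelD[OF cok]
  have e': "e \<in> hom A I" using epi_hom[OF e] .
  show "m \<cdot> e \<in> hom A B" using comp_closed[OF A I B e' cd(1)] .
  show "Q \<in> Ob C" "q \<in> hom B Q" using cd by simp_all
  show "q \<cdot> (m \<cdot> e) = \<zero>\<^bsub>A,Q\<^esub>"
    using comp_assoc[OF A I B cd(2) e' cd(1) cd(3)] cd(4) comp_zero_left[OF A I cd(2) e'] by simp
  fix Y h assume Y: "Y \<in> Ob C" and h: "h \<in> hom B Y" and z: "h \<cdot> (m \<cdot> e) = \<zero>\<^bsub>A,Y\<^esub>"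
  have "(h \<cdot> m) \<cdot> e = \<zero>\<^bsub>A,Y\<^esub>" using z comp_assoc[OF A I B Y e' cd(1) h] by simp
  then have "h \<cdot> m = \<zero>\<^bsub>I,Y\<^esub>" using epi_cancel_zero[OF A I Y e comp_closed[OF I B Y cd(1) h]] by blast
  then show "\<exists>!u. u \<in> hom Q Y \<and> u \<cdot> q = h" using cokernel_factor[OF cok Y h] by simp
qed

lemma hom_to_zero_obj: "is_zero_obj C Z \<Longrightarrow> A \<in> Ob C \<Longrightarrow> f \<in> hom A Z \<Longrightarrow> f = \<zero>\<^bsub>A,Z\<^esub>"
  unfolding is_zero_obj_def using zero_closed by blast

lemma hom_from_zero_obj: "is_zero_obj C Z \<Longrightarrow> A \<in> Ob C \<Longrightarrow> f \<in> hom Z A \<Longrightarrow> f = \<zero>\<^bsub>Z,A\<^esub>"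
  unfolding is_zero_obj_def using zero_closed by blast

lemma zero_obj_projective:
  assumes Z: "is_zero_obj C Z"
  shows "is_projective C Z"
  unfolding is_projective_def
proof (intro conjI ballI allI impI)
  show Zo: "Z \<in> Ob C" using Z unfolding is_zero_obj_def by blast
  fix X Y e h assume X: "X \<in> Ob C" and Y: "Y \<in> Ob C" and eh: "is_epi C X Y e \<and> h \<in> hom Z Y"
  have "e \<cdot> \<zero>\<^bsub>Z,X\<^esub> = h"
    using comp_zero_right[OF Zo X Y epi_hom] hom_from_zero_obj[OF Z Y] eh by metis
  then show "\<exists>h'\<in>hom Z X. e \<cdot> h' = h" using zero_closed[OF Zo X] by blast
qed

lemma zero_objI:
  assumes A: "A \<in> Ob C" and id: "idm C A = \<zero>\<^bsub>A,A\<^esub>"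
  shows "is_zero_obj C A"
  unfolding is_zero_obj_def
proof (intro conjI ballI)
  fix B assume B: "B \<in> Ob C"
  have "f = \<zero>\<^bsub>B,A\<^esub>" if "f \<in> hom B A" for f
    using comp_id_left[OF B A that] id comp_zero_left[OF B A A that] by simp
  then show "\<exists>!f. f \<in> hom B A" using zero_closed[OF B A] by blast
  have "f = \<zero>\<^bsub>A,B\<^esub>" if "f \<in> hom A B" for f
    using comp_id_right[OF A B that] id comp_zero_right[OF A A B that] by simp
  then show "\<exists>!f. f \<in> hom A B" using zero_closed[OF A B] by blast
qed (fact A)

lemma mono_into_zero_obj:
  assumes A: "A \<in> Ob C" and Z: "is_zero_obj C Z" and m: "is_mono C A Z m"
  shows "is_zero_obj C A"
proof -
  have Zo: "Z \<in> Ob C" using Z unfolding is_zero_obj_def by blast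
  have "m \<cdot> idm C A = m \<cdot> \<zero>\<^bsub>A,A\<^esub>"
    using hom_to_zero_obj[OF Z A comp_closed[OF A A Zo id_closed[OF A] mono_hom[OF m]]]
      hom_to_zero_obj[OF Z A comp_closed[OF A A Zo zero_closed[OF A A] mono_hom[OF m]]]
    by simp
  then have "idm C A = \<zero>\<^bsub>A,A\<^esub>" using mono_cancel[OF m A id_closed[OF A] zero_closed[OF A A]] by blast
  then show ?thesis using zero_objI[OF A] by blast
qed

lemma biproductD:
  assumes "is_biproduct C A B S i1 i2 p1 p2"
  shows "S \<in> Ob C" "i1 \<in> hom A S" "i2 \<in> hom B S" "p1 \<in> hom S A" "p2 \<in> hom S B"
    "p1 \<cdot> i1 = idm C A" "p2 \<cdot> i2 = idm C B" "p1 \<cdot> i2 = \<zero>\<^bsub>B,A\<^esub>" "p2 \<cdot> i1 = \<zero>\<^bsub>A,B\<^esub>"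
    "(i1 \<cdot> p1) \<oplus> (i2 \<cdot> p2) = idm C S"
  using assms unfolding is_biproduct_def by simp_all

lemma biproduct_proj1_diff:
  assumes A: "A \<in> Ob C" and B: "B \<in> Ob C" and Y: "Y \<in> Ob C"
    and bp: "is_biproduct C B Y P i1 i2 p1 p2" and m: "m \<in> hom A B" and a: "a \<in> hom A Y"
  shows "p1 \<cdot> ((i1 \<cdot> m) \<oplus> \<ominus> (i2 \<cdot> a)) = m"
proof -
  note bd = biproductD[OF bp]
  have "p1 \<cdot> ((i1 \<cdot> m) \<oplus> \<ominus> (i2 \<cdot> a)) = ((p1 \<cdot> i1) \<cdot> m) \<oplus> \<ominus> ((p1 \<cdot> i2) \<cdot> a)"
    using comp_add_right[OF A bd(1) B _ _ bd(4)] comp_neg_right[OF A bd(1) B _ bd(4)]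
      comp_assoc[OF A B bd(1) B m bd(2,4)] comp_assoc[OF A Y bd(1) B a bd(3,4)]
      comp_closed[OF A B bd(1) m bd(2)] comp_closed[OF A Y bd(1) a bd(3)] neg_closed[OF A bd(1)]
    by simp
  also have "\<dots> = m"
    using bd(6,8) comp_id_left[OF A B m] comp_zero_left[OF A Y B a] neg_zero[OF A B] add_zero[OF A B m] by simp
  finally show ?thesis .
qed

lemma complexD:
  assumes "is_complex C X d"
  shows "X i \<in> Ob C" "d i \<in> hom (X i) (X (i + 1))" "d (i - 1) \<in> hom (X (i - 1)) (X i)"
    "d i \<cdot> d (i - 1) = \<zero>\<^bsub>X (i - 1),X (i + 1)\<^esub>"
proof -
  have "\<forall>i. X i \<in> Ob C \<and> d i \<in> hom (X i) (X (i + 1)) \<and> d (i + 1) \<cdot> d i = \<zero>\<^bsub>X i,X (i + 2)\<^esub>"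
    using assms unfolding is_complex_def by blast
  from this[rule_format, of i] this[rule_format, of "i - 1"]
  show "X i \<in> Ob C" "d i \<in> hom (X i) (X (i + 1))" "d (i - 1) \<in> hom (X (i - 1)) (X i)"
    "d i \<cdot> d (i - 1) = \<zero>\<^bsub>X (i - 1),X (i + 1)\<^esub>"
    by (simp_all add: algebra_simps)
qed

lemma chain_map_homotopy_defect:
  assumes cG: "is_complex C G dG" and cI: "is_complex C I dI" and f: "chain_map C G dG I dI f"
    and x: "x \<in> hom (G i) (I (i - 1))" and y: "y \<in> hom (G (i + 1)) (I i)"
    and y_lifts: "y \<cdot> dG i = f i \<oplus> \<ominus> (dI (i - 1) \<cdot> x)"
  shows "(f (i + 1) \<oplus> \<ominus> (dI i \<cdot> y)) \<cdot> dG i = \<zero>\<^bsub>G i,I (i + 1)\<^esub>"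
proof -
  note g = complexD[OF cG] and d = complexD[OF cI]
  have fi: "\<And>i. f i \<in> hom (G i) (I i)" and commute: "dI i \<cdot> f i = f (i + 1) \<cdot> dG i"
    using f unfolding chain_map_def by blast+
  have G': "G (i + 1) \<in> Ob C" and I': "I (i + 1) \<in> Ob C" and I'': "I (i - 1) \<in> Ob C"
    using complexD(1)[OF cG] complexD(1)[OF cI] by blast+
  have dx: "dI (i - 1) \<cdot> x \<in> hom (G i) (I i)" using comp_closed[OF g(1) I'' d(1) x d(3)] .
  have dy: "dI i \<cdot> y \<in> hom (G (i + 1)) (I (i + 1))" using comp_closed[OF G' d(1) I' y d(2)] .
  have "dI i \<cdot> (y \<cdot> dG i) = (dI i \<cdot> f i) \<oplus> \<ominus> ((dI i \<cdot> dI (i - 1)) \<cdot> x)"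
    using y_lifts comp_add_right[OF g(1) d(1) I' fi neg_closed[OF g(1) d(1) dx] d(2)]
      comp_neg_right[OF g(1) d(1) I' dx d(2)] comp_assoc[OF g(1) I'' d(1) I' x d(3) d(2)] by simp
  also have "\<dots> = f (i + 1) \<cdot> dG i"
    using commute d(4) comp_zero_left[OF g(1) I'' I' x] neg_zero[OF g(1) I']
      add_zero[OF g(1) I' comp_closed[OF g(1) G' I' g(2) fi]] by simp
  finally have "(dI i \<cdot> y) \<cdot> dG i = f (i + 1) \<cdot> dG i"
    using comp_assoc[OF g(1) G' d(1) I' g(2) y d(2)] by simp
  then show ?thesis
    using comp_add_left[OF g(1) G' I' g(2) fi neg_closed[OF G' I' dy]] comp_neg_left[OF g(1) G' I' g(2) dy]
      add_neg[OF g(1) I' comp_closed[OF g(1) G' I' g(2) fi]] by simp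
qed

lemma null_homotopic_if_cocycles_extend:
  assumes cG: "is_complex C G dG" and cI: "is_complex C I dI" and f: "chain_map C G dG I dI f"
    and vanish: "\<And>i. i \<le> m \<Longrightarrow> is_zero_obj C (I i)"
    and extend: "\<And>j h. h \<in> hom (G j) (I j) \<Longrightarrow> h \<cdot> dG (j - 1) = \<zero>\<^bsub>G (j - 1),I j\<^esub> \<Longrightarrow>
      \<exists>b\<in>hom (G (j + 1)) (I j). b \<cdot> dG j = h"
  shows "null_homotopic C G dG I dI f"
proof -
  note g = complexD[OF cG] and d = complexD[OF cI]
  have fi: "\<And>i. f i \<in> hom (G i) (I i)" using f unfolding chain_map_def by blast
  define deg :: "nat \<Rightarrow> int" where "deg n = m + 1 + int n" for n
  define defect where "defect i x = f i \<oplus> \<ominus> (dI (i - 1) \<cdot> x)" for i x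
  have defect_hom: "defect i x \<in> hom (G i) (I i)" if "x \<in> hom (G i) (I (i - 1))" for i x
    unfolding defect_def using add_closed[OF g(1) d(1) fi neg_closed[OF g(1) d(1) comp_closed[OF g(1) d(1,1) that d(3)]]] .
  define P where "P n x \<longleftrightarrow> x \<in> hom (G (deg n)) (I (deg n - 1)) \<and>
      defect (deg n) x \<cdot> dG (deg n - 1) = \<zero>\<^bsub>G (deg n - 1),I (deg n)\<^esub>" for n x
  have "\<exists>\<sigma>. \<forall>n. P n (\<sigma> n) \<and> \<sigma> (Suc n) \<cdot> dG (deg n) = defect (deg n) (\<sigma> n)"
  proof (rule dependent_nat_choice)
    have "\<zero>\<^bsub>G (m + 1),I m\<^esub> \<cdot> dG m = defect m \<zero>\<^bsub>G m,I (m - 1)\<^esub>"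
      using comp_zero_left[OF g(1) g(1) d(1) g(2)]
        hom_to_zero_obj[OF vanish[OF order_refl] g(1) defect_hom[OF zero_closed[OF g(1) d(1)]]] by simp
    then have "P 0 \<zero>\<^bsub>G (m + 1),I m\<^esub>"
      using chain_map_homotopy_defect[OF cG cI f zero_closed[OF g(1) d(1)] zero_closed[OF g(1) d(1)]]
        zero_closed[OF g(1) d(1)] unfolding P_def deg_def defect_def by simp
    then show "\<exists>x. P 0 x" ..
  next
    fix x n assume "P n x"
    then obtain y where y: "y \<in> hom (G (deg n + 1)) (I (deg n))" "y \<cdot> dG (deg n) = defect (deg n) x"
      using extend defect_hom unfolding P_def by blast
    moreover have "deg (Suc n) = deg n + 1" unfolding deg_def by simp
    ultimately show "\<exists>y. P (Suc n) y \<and> y \<cdot> dG (deg n) = defect (deg n) x"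
      using \<open>P n x\<close> chain_map_homotopy_defect[OF cG cI f _ y(1)] unfolding P_def defect_def by auto
  qed
  then obtain \<sigma> where \<sigma>: "\<And>n. \<sigma> n \<in> hom (G (deg n)) (I (deg n - 1))"
    and \<sigma>_lifts: "\<And>n. \<sigma> (Suc n) \<cdot> dG (deg n) = defect (deg n) (\<sigma> n)"
    unfolding P_def by blast
  define s where "s i = (if i \<le> m then \<zero>\<^bsub>G i,I (i - 1)\<^esub> else \<sigma> (nat (i - m - 1)))" for i
  have s: "s i \<in> hom (G i) (I (i - 1))" for i
    using \<sigma>[of "nat (i - m - 1)"] zero_closed[OF g(1) d(1)] unfolding s_def deg_def by auto
  have "f i = (dI (i - 1) \<cdot> s i) \<oplus> (s (i + 1) \<cdot> dG i)" for i
  proof (cases "i \<le> m")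
    case True
    have I': "I (i + 1) \<in> Ob C" using d(1) by blast
    have "dI (i - 1) \<cdot> s i = \<zero>\<^bsub>G i,I i\<^esub>" "s (i + 1) \<cdot> dG i = \<zero>\<^bsub>G i,I i\<^esub>" "f i = \<zero>\<^bsub>G i,I i\<^esub>"
      using hom_to_zero_obj[OF vanish[OF True] g(1)] comp_closed[OF g(1) d(1,1) s d(3)]
        comp_closed[OF g(1) g(1) d(1) g(2) s] fi by simp_all
    then show ?thesis using add_zero[OF g(1) d(1) zero_closed[OF g(1) d(1)]] by simp
  next
    case False
    define n where "n = nat (i - m - 1)"
    have i: "i = deg n" unfolding deg_def n_def using False by simp
    then have "s i = \<sigma> n" "s (i + 1) = \<sigma> (Suc n)" unfolding s_def deg_def by (simp_all add: nat_add_distrib)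
    then show ?thesis
      using i \<sigma>_lifts[of n] add_diff_cancel_left[OF g(1) d(1) comp_closed[OF g(1) d(1,1) \<sigma>[of n] d(3)] fi]
      unfolding defect_def by simp
  qed
  then show ?thesis unfolding null_homotopic_def using s by blast
qed

end

locale abelian_cat =
  fixes C :: "('o, 'm, 'x) cat_scheme"
  assumes abelian: "is_abelian C"

sublocale abelian_cat \<subseteq> preadditive_cat
  using abelian unfolding is_abelian_def by unfold_locales blast

context abelian_cat
begin

lemma kernel_exists: "A \<in> Ob C \<Longrightarrow> B \<in> Ob C \<Longrightarrow> f \<in> hom A B \<Longrightarrow> \<exists>K k. is_kernel C A B f K k"
  using abelian unfolding is_abelian_def by blast

lemma cokernel_exists: "A \<in> Ob C \<Longrightarrow> B \<in> Ob C \<Longrightarrow> f \<in> hom A B \<Longrightarrow> \<exists>Q q. is_cokernel C A B f Q q"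
  using abelian unfolding is_abelian_def by blast

lemma biproduct_exists: "A \<in> Ob C \<Longrightarrow> B \<in> Ob C \<Longrightarrow> \<exists>S i1 i2 p1 p2. is_biproduct C A B S i1 i2 p1 p2"
  using abelian unfolding is_abelian_def by blast

lemma mono_is_kernel_of_cokernel:
  assumes A: "A \<in> Ob C" and B: "B \<in> Ob C" and m: "is_mono C A B m"
    and cok: "is_cokernel C A B m Q c"
  shows "is_kernel C B Q c A m"
  unfolding is_kernel_def
proof (intro conjI ballI impI)
  obtain D g where D: "D \<in> Ob C" and g: "g \<in> hom B D" and ker: "is_kernel C B D g A m"
    using abelian A B m unfolding is_abelian_def by blast
  note cd = cokernelD[OF cok]
  show "c \<in> hom B Q" "A \<in> Ob C" "m \<in> hom A B" "c \<cdot> m = \<zero>\<^bsub>A,Q\<^esub>" using cd A mono_hom[OF m] by simp_all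
  obtain g' where g': "g' \<in> hom Q D" "g' \<cdot> c = g"
    using cokernel_factor[OF cok D g] kernelD(4)[OF ker] by blast
  fix X h assume X: "X \<in> Ob C" and h: "h \<in> hom X B" and ch: "c \<cdot> h = \<zero>\<^bsub>X,Q\<^esub>"
  have "g \<cdot> h = g' \<cdot> (c \<cdot> h)" using g' comp_assoc[OF X B cd(2) D h cd(3) g'(1)] by simp
  also have "\<dots> = \<zero>\<^bsub>X,D\<^esub>" using ch comp_zero_right[OF X cd(2) D g'(1)] by simp
  finally show "\<exists>!u. u \<in> hom X A \<and> m \<cdot> u = h" using kernel_factor[OF ker X h] by simp
qed

lemma epi_is_cokernel_of_kernel:
  assumes A: "A \<in> Ob C" and B: "B \<in> Ob C" and e: "is_epi C A B e"
    and ker: "is_kernel C A B e K k"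
  shows "is_cokernel C K A k B e"
  unfolding is_cokernel_def
proof (intro conjI ballI impI)
  obtain D g where D: "D \<in> Ob C" and g: "g \<in> hom D A" and cok: "is_cokernel C D A g B e"
    using abelian A B e unfolding is_abelian_def by blast
  note kd = kernelD[OF ker]
  show "k \<in> hom K A" "B \<in> Ob C" "e \<in> hom A B" "e \<cdot> k = \<zero>\<^bsub>K,B\<^esub>" using kd B epi_hom[OF e] by simp_all
  obtain g' where g': "g' \<in> hom D K" "k \<cdot> g' = g"
    using kernel_factor[OF ker D g] cokernelD(4)[OF cok] by blast
  fix Y h assume Y: "Y \<in> Ob C" and h: "h \<in> hom A Y" and hk: "h \<cdot> k = \<zero>\<^bsub>K,Y\<^esub>"
  have "h \<cdot> g = (h \<cdot> k) \<cdot> g'" using g' comp_assoc[OF D kd(2) A Y g'(1) kd(3) h] by simp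
  also have "\<dots> = \<zero>\<^bsub>D,Y\<^esub>" using hk comp_zero_left[OF D kd(2) Y g'(1)] by simp
  finally show "\<exists>!u. u \<in> hom B Y \<and> u \<cdot> e = h" using cokernel_factor[OF cok Y h] by simp
qed

lemma exact_epi_is_cokernel:
  assumes A: "A \<in> Ob C" and B: "B \<in> Ob C" and I: "I \<in> Ob C"
    and exact: "is_exact C A B I f e" and e: "is_epi C B I e"
  shows "is_cokernel C A B f I e"
  unfolding is_cokernel_def
proof (intro conjI ballI impI)
  show f: "f \<in> hom A B" "I \<in> Ob C" "e \<in> hom B I" "e \<cdot> f = \<zero>\<^bsub>A,I\<^esub>"
    using exact I unfolding is_exact_def by simp_all
  obtain K k where ker: "is_kernel C B I e K k" using kernel_exists[OF B I epi_hom[OF e]] by blast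
  note kd = kernelD[OF ker]
  obtain Q q where cok: "is_cokernel C A B f Q q" using cokernel_exists[OF A B f(1)] by blast
  note cd = cokernelD[OF cok]
  fix Y h assume Y: "Y \<in> Ob C" and h: "h \<in> hom B Y" and hf: "h \<cdot> f = \<zero>\<^bsub>A,Y\<^esub>"
  obtain h' where h': "h' \<in> hom Q Y" "h' \<cdot> q = h" using cokernel_factor[OF cok Y h hf] by blast
  have "h \<cdot> k = h' \<cdot> (q \<cdot> k)" using h' comp_assoc[OF kd(2) B cd(2) Y kd(3) cd(3) h'(1)] by simp
  also have "\<dots> = \<zero>\<^bsub>K,Y\<^esub>"
    using exact ker cok comp_zero_right[OF kd(2) cd(2) Y h'(1)] unfolding is_exact_def by simp
  finally show "\<exists>!u. u \<in> hom I Y \<and> u \<cdot> e = h"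
    using cokernel_factor[OF epi_is_cokernel_of_kernel[OF B I e ker] Y h] by simp
qed

lemma short_exactD:
  assumes "short_exact C A B X m q"
  shows "A \<in> Ob C" "B \<in> Ob C" "X \<in> Ob C" "is_mono C A B m" "is_epi C B X q"
    "m \<in> hom A B" "q \<in> hom B X" "q \<cdot> m = \<zero>\<^bsub>A,X\<^esub>" "is_exact C A B X m q"
  using assms unfolding short_exact_def is_exact_def by blast+

lemma short_exact_cokernel: "short_exact C A B X m q \<Longrightarrow> is_cokernel C A B m X q"
  by (rule exact_epi_is_cokernel[OF short_exactD(1-3,9,5)])

lemma coimage_to_image_epi:
  assumes A: "A \<in> Ob C" and B: "B \<in> Ob C"
    and cok: "is_cokernel C A B f Q c" and ker: "is_kernel C B Q c K k"
    and e: "e \<in> hom A K" and factor: "k \<cdot> e = f"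
  shows "is_epi C A K e"
proof (rule epiI[OF A kernelD(2)[OF ker] e])
  note cd = cokernelD[OF cok] and kd = kernelD[OF ker]
  fix Y g assume Y: "Y \<in> Ob C" and g: "g \<in> hom K Y" and ge: "g \<cdot> e = \<zero>\<^bsub>A,Y\<^esub>"
  obtain Q' c' where cok': "is_cokernel C A K e Q' c'" using cokernel_exists[OF A kd(2) e] by blast
  note cd' = cokernelD[OF cok']
  obtain K' k' where ker': "is_kernel C K Q' c' K' k'" using kernel_exists[OF kd(2) cd'(2) cd'(3)] by blast
  note kd' = kernelD[OF ker']
  obtain e' where e': "e' \<in> hom A K'" "k' \<cdot> e' = e" using kernel_factor[OF ker' A e cd'(4)] by blast
  have kk': "is_mono C K' B (k \<cdot> k')"
    using mono_comp[OF kd'(2) kd(2) B kernel_is_mono[OF kd(2) cd'(2) ker'] kernel_is_mono[OF B cd(2) ker]] .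
  note kk'_hom = mono_hom[OF kk']
  obtain D d where cokd: "is_cokernel C K' B (k \<cdot> k') D d" using cokernel_exists[OF kd'(2) B kk'_hom] by blast
  note dd = cokernelD[OF cokd]
  \<comment> \<open>f factors through the subobject \<open>k \<cdot> k'\<close> of its image, so \<open>k \<cdot> k'\<close> is already all of it\<close>
  have "f = (k \<cdot> k') \<cdot> e'" using e' factor comp_assoc[OF A kd'(2) kd(2) B e'(1) kd'(3) kd(3)] by simp
  then have "d \<cdot> f = \<zero>\<^bsub>A,D\<^esub>"
    using comp_assoc[OF A kd'(2) B dd(2) e'(1) kk'_hom dd(3)] dd(4) comp_zero_left[OF A kd'(2) dd(2) e'(1)] by simp
  then obtain d' where d': "d' \<in> hom Q D" "d' \<cdot> c = d" using cokernel_factor[OF cok dd(2) dd(3)] by blast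
  have "d \<cdot> k = d' \<cdot> (c \<cdot> k)" using d' comp_assoc[OF kd(2) B cd(2) dd(2) kd(3) cd(3) d'(1)] by simp
  also have "\<dots> = \<zero>\<^bsub>K,D\<^esub>" using kd(4) comp_zero_right[OF kd(2) cd(2) dd(2) d'(1)] by simp
  finally obtain v where v: "v \<in> hom K K'" "(k \<cdot> k') \<cdot> v = k"
    using kernel_factor[OF mono_is_kernel_of_cokernel[OF kd'(2) B kk' cokd] kd(2) kd(3)] by blast
  have "k \<cdot> (k' \<cdot> v) = k \<cdot> idm C K"
    using v comp_assoc[OF kd(2) kd'(2) kd(2) B v(1) kd'(3) kd(3)] comp_id_right[OF kd(2) B kd(3)] by simp
  then have k'v: "k' \<cdot> v = idm C K"
    using mono_cancel[OF kernel_is_mono[OF B cd(2) ker] kd(2) comp_closed[OF kd(2) kd'(2) kd(2) v(1) kd'(3)]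
        id_closed[OF kd(2)]] by blast
  have "c' = (c' \<cdot> k') \<cdot> v"
    using k'v comp_id_right[OF kd(2) cd'(2) cd'(3)] comp_assoc[OF kd(2) kd'(2) kd(2) cd'(2) v(1) kd'(3) cd'(3)]
    by simp
  also have "\<dots> = \<zero>\<^bsub>K,Q'\<^esub>" using kd'(4) comp_zero_left[OF kd(2) kd'(2) cd'(2) v(1)] by simp
  finally have "c' = \<zero>\<^bsub>K,Q'\<^esub>" .
  moreover obtain u where "u \<in> hom Q' Y" "u \<cdot> c' = g" using cokernel_factor[OF cok' Y g ge] by blast
  ultimately show "g = \<zero>\<^bsub>K,Y\<^esub>" using comp_zero_right[OF kd(2) cd'(2) Y] by blast
qed

lemma image_factorization:
  assumes A: "A \<in> Ob C" and B: "B \<in> Ob C" and f: "f \<in> hom A B"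
  shows "\<exists>I m e. I \<in> Ob C \<and> is_mono C I B m \<and> is_epi C A I e \<and> f = m \<cdot> e"
proof -
  obtain Q c where cok: "is_cokernel C A B f Q c" using cokernel_exists[OF A B f] by blast
  note cd = cokernelD[OF cok]
  obtain K k where ker: "is_kernel C B Q c K k" using kernel_exists[OF B cd(2) cd(3)] by blast
  obtain e where e: "e \<in> hom A K" "k \<cdot> e = f" using kernel_factor[OF ker A f cd(4)] by blast
  show ?thesis
    using kernelD(2)[OF ker] kernel_is_mono[OF B cd(2) ker] coimage_to_image_epi[OF A B cok ker e] e(2)
    by blast
qed

(* The pushout of 0 \<rightarrow> A \<rightarrow> B \<rightarrow> X \<rightarrow> 0 along a : A \<rightarrow> Y, realised as the cokernel E of
   \<phi> = (m, -a) : A \<rightarrow> B \<oplus> Y; it is again an extension 0 \<rightarrow> Y \<rightarrow> E \<rightarrow> X \<rightarrow> 0. *)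

context
  fixes A B X m q Y a P i1 i2 p1 p2 \<phi> E c j q'
  assumes ses: "short_exact C A B X m q" and Y: "Y \<in> Ob C" and a: "a \<in> hom A Y"
    and biproduct: "is_biproduct C B Y P i1 i2 p1 p2"
    and \<phi>: "\<phi> = (i1 \<cdot> m) \<oplus> \<ominus> (i2 \<cdot> a)"
    and cok: "is_cokernel C A P \<phi> E c"
    and j: "j = c \<cdot> i2"
    and q': "q' \<in> hom E X" "q' \<cdot> c = q \<cdot> p1"
begin

lemma pushout_square: "c \<cdot> (i1 \<cdot> m) = j \<cdot> a"
proof -
  note sd = short_exactD[OF ses] and bd = biproductD[OF biproduct] and cd = cokernelD[OF cok]
  have i1m: "i1 \<cdot> m \<in> hom A P" and i2a: "i2 \<cdot> a \<in> hom A P"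
    using comp_closed[OF sd(1) sd(2) bd(1) sd(6) bd(2)] comp_closed[OF sd(1) Y bd(1) a bd(3)] .
  have "i1 \<cdot> m = \<phi> \<oplus> (i2 \<cdot> a)"
    unfolding \<phi> using add_assoc[OF sd(1) bd(1) i1m neg_closed[OF sd(1) bd(1) i2a] i2a]
      neg_add[OF sd(1) bd(1) i2a] add_zero[OF sd(1) bd(1) i1m] by simp
  then have "c \<cdot> (i1 \<cdot> m) = (c \<cdot> \<phi>) \<oplus> (c \<cdot> (i2 \<cdot> a))"
    using comp_add_right[OF sd(1) bd(1) cd(2) cd(1) i2a cd(3)] by simp
  then show ?thesis
    unfolding j using cd(4) comp_assoc[OF sd(1) Y bd(1) cd(2) a bd(3) cd(3)]
      zero_add[OF sd(1) cd(2) comp_closed[OF sd(1) Y cd(2) a comp_closed[OF Y bd(1) cd(2) bd(3) cd(3)]]]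
    by simp
qed

lemma pushout_inclusion_mono: "is_mono C Y E j"
proof -
  note sd = short_exactD[OF ses] and bd = biproductD[OF biproduct] and cd = cokernelD[OF cok]
  have p1\<phi>: "p1 \<cdot> \<phi> = m" using biproduct_proj1_diff[OF sd(1,2) Y biproduct sd(6) a] unfolding \<phi> .
  have \<phi>_mono: "is_mono C A P \<phi>"
  proof (rule monoI[OF sd(1) bd(1) cd(1)])
    fix T g assume T: "T \<in> Ob C" and g: "g \<in> hom T A" and z: "\<phi> \<cdot> g = \<zero>\<^bsub>T,P\<^esub>"
    have "m \<cdot> g = \<zero>\<^bsub>T,B\<^esub>"
      using p1\<phi> comp_assoc[OF T sd(1) bd(1) sd(2) g cd(1) bd(4)] z comp_zero_right[OF T bd(1) sd(2) bd(4)]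
      by simp
    then show "g = \<zero>\<^bsub>T,A\<^esub>" using mono_cancel_zero[OF sd(1,2) T sd(4) g] by blast
  qed
  show ?thesis
  proof (rule monoI[OF Y cd(2)])
    show "j \<in> hom Y E" unfolding j using comp_closed[OF Y bd(1) cd(2) bd(3) cd(3)] .
    fix T g assume T: "T \<in> Ob C" and g: "g \<in> hom T Y" and z: "j \<cdot> g = \<zero>\<^bsub>T,E\<^esub>"
    have i2g: "i2 \<cdot> g \<in> hom T P" using comp_closed[OF T Y bd(1) g bd(3)] .
    have "c \<cdot> (i2 \<cdot> g) = \<zero>\<^bsub>T,E\<^esub>" using z comp_assoc[OF T Y bd(1) cd(2) g bd(3) cd(3)] unfolding j by simp
    then obtain w where w: "w \<in> hom T A" "\<phi> \<cdot> w = i2 \<cdot> g"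
      using kernel_factor[OF mono_is_kernel_of_cokernel[OF sd(1) bd(1) \<phi>_mono cok] T i2g] by blast
    have "m \<cdot> w = (p1 \<cdot> i2) \<cdot> g"
      using p1\<phi> w comp_assoc[OF T sd(1) bd(1) sd(2) w(1) cd(1) bd(4)]
        comp_assoc[OF T Y bd(1) sd(2) g bd(3) bd(4)] by simp
    then have "m \<cdot> w = \<zero>\<^bsub>T,B\<^esub>" using bd(8) comp_zero_left[OF T Y sd(2) g] by simp
    then have "i2 \<cdot> g = \<zero>\<^bsub>T,P\<^esub>"
      using w mono_cancel_zero[OF sd(1,2) T sd(4) w(1)] comp_zero_right[OF T sd(1) bd(1) cd(1)] by simp
    then have "p2 \<cdot> (i2 \<cdot> g) = \<zero>\<^bsub>T,Y\<^esub>" using comp_zero_right[OF T bd(1) Y bd(5)] by simp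
    then show "g = \<zero>\<^bsub>T,Y\<^esub>" using comp_assoc[OF T Y bd(1) Y g bd(3) bd(5)] bd(7) comp_id_left[OF T Y g] by simp
  qed
qed

lemma pushout_quotient_epi: "is_epi C E X q'"
proof -
  note sd = short_exactD[OF ses] and bd = biproductD[OF biproduct] and cd = cokernelD[OF cok]
  show ?thesis
  proof (rule epiI[OF cd(2) sd(3) q'(1)])
    fix Z g assume Z: "Z \<in> Ob C" and g: "g \<in> hom X Z" and z: "g \<cdot> q' = \<zero>\<^bsub>E,Z\<^esub>"
    have "q = (q \<cdot> p1) \<cdot> i1" using comp_assoc[OF sd(2) bd(1) sd(2) sd(3) bd(2) bd(4) sd(7)] bd(6)
        comp_id_right[OF sd(2,3,7)] by simp
    then have "g \<cdot> q = ((g \<cdot> q') \<cdot> c) \<cdot> i1"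
      using q'(2) comp_assoc[OF sd(2) bd(1) sd(3) Z bd(2) comp_closed[OF bd(1) cd(2) sd(3) cd(3) q'(1)] g]
        comp_assoc[OF bd(1) cd(2) sd(3) Z cd(3) q'(1) g] by simp
    also have "\<dots> = \<zero>\<^bsub>B,Z\<^esub>" using z comp_zero_left[OF bd(1) cd(2) Z cd(3)] comp_zero_left[OF sd(2) bd(1) Z bd(2)]
      by simp
    finally show "g = \<zero>\<^bsub>X,Z\<^esub>" using epi_cancel_zero[OF sd(2,3) Z sd(5) g] by blast
  qed
qed

lemma pushout_exact: "is_exact C Y E X j q'"
  unfolding is_exact_def
proof (intro conjI allI impI)
  note sd = short_exactD[OF ses] and bd = biproductD[OF biproduct] and cd = cokernelD[OF cok]
  show j_hom: "j \<in> hom Y E" unfolding j using comp_closed[OF Y bd(1) cd(2) bd(3) cd(3)] .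
  show "q' \<in> hom E X" by (fact q'(1))
  show "q' \<cdot> j = \<zero>\<^bsub>Y,X\<^esub>"
    unfolding j using comp_assoc[OF Y bd(1) cd(2) sd(3) bd(3) cd(3) q'(1)] q'(2)
      comp_assoc[OF Y bd(1) sd(2) sd(3) bd(3) bd(4) sd(7)] bd(8) comp_zero_right[OF Y sd(2,3,7)] by simp
  fix K k Q r assume kr: "is_kernel C E X q' K k \<and> is_cokernel C Y E j Q r"
  note kd = kernelD[OF kr[THEN conjunct1]] and rd = cokernelD[OF kr[THEN conjunct2]]
  have rc: "r \<cdot> c \<in> hom P Q" using comp_closed[OF bd(1) cd(2) rd(2) cd(3) rd(3)] .
  have rci1: "(r \<cdot> c) \<cdot> i1 \<in> hom B Q" using comp_closed[OF sd(2) bd(1) rd(2) bd(2) rc] .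
  have "((r \<cdot> c) \<cdot> i1) \<cdot> m = r \<cdot> (j \<cdot> a)"
    using pushout_square comp_assoc[OF sd(1,2) bd(1) rd(2) sd(6) bd(2) rc]
      comp_assoc[OF sd(1) bd(1) cd(2) rd(2) comp_closed[OF sd(1,2) bd(1) sd(6) bd(2)] cd(3) rd(3)] by simp
  also have "\<dots> = \<zero>\<^bsub>A,Q\<^esub>" using comp_assoc[OF sd(1) Y cd(2) rd(2) a j_hom rd(3)] rd(4)
      comp_zero_left[OF sd(1) Y rd(2) a] by simp
  finally obtain s where s: "s \<in> hom X Q" "s \<cdot> q = (r \<cdot> c) \<cdot> i1"
    using cokernel_factor[OF short_exact_cokernel[OF ses] rd(2) rci1] by blast
  \<comment> \<open>\<open>r\<close> factors through \<open>q'\<close> because \<open>r \<cdot> c\<close> vanishes on the summand \<open>Y\<close> of \<open>P\<close>\<close>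
  have "(r \<cdot> c) \<cdot> i2 = \<zero>\<^bsub>Y,Q\<^esub>" using comp_assoc[OF Y bd(1) cd(2) rd(2) bd(3) cd(3) rd(3)] rd(4) unfolding j
    by simp
  then have "r \<cdot> c = (((r \<cdot> c) \<cdot> i1) \<cdot> p1) \<oplus> \<zero>\<^bsub>P,Q\<^esub>"
    using bd(10) comp_id_right[OF bd(1) rd(2) rc]
      comp_add_right[OF bd(1) bd(1) rd(2) comp_closed[OF bd(1) sd(2) bd(1) bd(4) bd(2)]
        comp_closed[OF bd(1) Y bd(1) bd(5) bd(3)] rc]
      comp_assoc[OF bd(1) sd(2) bd(1) rd(2) bd(4) bd(2) rc] comp_assoc[OF bd(1) Y bd(1) rd(2) bd(5) bd(3) rc]
      comp_zero_left[OF bd(1) Y rd(2) bd(5)] by simp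
  also have "\<dots> = (s \<cdot> q') \<cdot> c"
    using add_zero[OF bd(1) rd(2) comp_closed[OF bd(1) sd(2) rd(2) bd(4) rci1]] s(2) q'(2)
      comp_assoc[OF bd(1) sd(2) sd(3) rd(2) bd(4) sd(7) s(1)] comp_assoc[OF bd(1) cd(2) sd(3) rd(2) cd(3) q'(1) s(1)]
    by simp
  finally have "r = s \<cdot> q'"
    using epi_cancel[OF cokernel_is_epi[OF sd(1) bd(1) cok] rd(2) rd(3) comp_closed[OF cd(2) sd(3) rd(2) q'(1) s(1)]]
    by blast
  then show "r \<cdot> k = \<zero>\<^bsub>K,Q\<^esub>"
    using comp_assoc[OF kd(2) cd(2) sd(3) rd(2) kd(3) q'(1) s(1)] kd(4) comp_zero_right[OF kd(2) sd(3) rd(2) s(1)]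
    by simp
qed

lemma pushout_short_exact: "short_exact C Y E X j q'"
  unfolding short_exact_def
  using Y cokernelD(2)[OF cok] short_exactD(3)[OF ses] pushout_inclusion_mono pushout_quotient_epi pushout_exact
  by blast

end

lemma ext1_zero_extend_along_mono:
  assumes ses: "short_exact C A B X m q" and Y: "Y \<in> Ob C" and ext: "ext1_zero C X Y"
    and a: "a \<in> hom A Y"
  shows "\<exists>b\<in>hom B Y. b \<cdot> m = a"
proof -
  note sd = short_exactD[OF ses]
  obtain P i1 i2 p1 p2 where bp: "is_biproduct C B Y P i1 i2 p1 p2" using biproduct_exists[OF sd(2) Y] by blast
  note bd = biproductD[OF bp]
  define \<phi> where "\<phi> = (i1 \<cdot> m) \<oplus> \<ominus> (i2 \<cdot> a)"
  have \<phi>_hom: "\<phi> \<in> hom A P"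
    unfolding \<phi>_def using add_closed[OF sd(1) bd(1) comp_closed[OF sd(1,2) bd(1) sd(6) bd(2)]
        neg_closed[OF sd(1) bd(1) comp_closed[OF sd(1) Y bd(1) a bd(3)]]] .
  obtain E c where cok: "is_cokernel C A P \<phi> E c" using cokernel_exists[OF sd(1) bd(1) \<phi>_hom] by blast
  note cd = cokernelD[OF cok]
  have qp1: "q \<cdot> p1 \<in> hom P X" using comp_closed[OF bd(1) sd(2,3) bd(4) sd(7)] .
  have "(q \<cdot> p1) \<cdot> \<phi> = \<zero>\<^bsub>A,X\<^esub>"
    using comp_assoc[OF sd(1) bd(1) sd(2,3) \<phi>_hom bd(4) sd(7)] biproduct_proj1_diff[OF sd(1,2) Y bp sd(6) a, folded \<phi>_def] sd(8)
    by simp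
  then obtain q' where q': "q' \<in> hom E X" "q' \<cdot> c = q \<cdot> p1" using cokernel_factor[OF cok sd(3) qp1] by blast
  note pushout = ses Y a bp \<phi>_def cok refl q'
  obtain r where r: "r \<in> hom E Y" "r \<cdot> (c \<cdot> i2) = idm C Y"
    using ext pushout_short_exact[OF pushout] unfolding ext1_zero_def by blast
  have rc: "r \<cdot> c \<in> hom P Y" using comp_closed[OF bd(1) cd(2) Y cd(3) r(1)] .
  have "((r \<cdot> c) \<cdot> i1) \<cdot> m = r \<cdot> ((c \<cdot> i2) \<cdot> a)"
    using pushout_square[OF pushout] comp_assoc[OF sd(1,2) bd(1) Y sd(6) bd(2) rc]
      comp_assoc[OF sd(1) bd(1) cd(2) Y comp_closed[OF sd(1,2) bd(1) sd(6) bd(2)] cd(3) r(1)] by simp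
  also have "\<dots> = a"
    using comp_assoc[OF sd(1) Y cd(2) Y a comp_closed[OF Y bd(1) cd(2) bd(3) cd(3)] r(1)] r(2) comp_id_left[OF sd(1) Y a]
    by simp
  finally show ?thesis using comp_closed[OF sd(2) bd(1) Y bd(2) rc] by blast
qed

context
  fixes G dG Im k e
  assumes complex: "is_complex C G dG" and acyclic: "acyclic_cx C G dG"
    and image: "\<And>i. Im i \<in> Ob C"
    and image_mono: "\<And>i. is_mono C (Im i) (G (i + 1)) (k i)"
    and image_epi: "\<And>i. is_epi C (G i) (Im i) (e i)"
    and image_factor: "\<And>i. dG i = k i \<cdot> e i"
begin

lemma acyclic_image_cokernel: "is_cokernel C (G (i - 1)) (G i) (dG (i - 1)) (Im i) (e i)"
proof (rule exact_epi_is_cokernel[OF complexD(1)[OF complex] complexD(1)[OF complex] image _ image_epi])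
  note cx = complexD[OF complex]
  have z: "e i \<cdot> dG (i - 1) = \<zero>\<^bsub>G (i - 1),Im i\<^esub>"
  proof (rule mono_cancel_zero[OF image cx(1,1) image_mono comp_closed[OF cx(1,1) image cx(3) epi_hom[OF image_epi]]])
    show "k i \<cdot> (e i \<cdot> dG (i - 1)) = \<zero>\<^bsub>G (i - 1),G (i + 1)\<^esub>"
      using comp_assoc[OF cx(1,1) image cx(1) cx(3) epi_hom[OF image_epi] mono_hom[OF image_mono]] image_factor cx(4)
      by simp
  qed
  have "is_exact C (G (i - 1)) (G i) (G (i + 1)) (dG (i - 1)) (k i \<cdot> e i)"
    using acyclic image_factor unfolding acyclic_cx_def by metis
  moreover have "is_kernel C (G i) (Im i) (e i) K kk \<Longrightarrow> is_kernel C (G i) (G (i + 1)) (k i \<cdot> e i) K kk" for K kk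
    using kernel_comp_mono[OF cx(1) image cx(1) _ image_mono] .
  ultimately show "is_exact C (G (i - 1)) (G i) (Im i) (dG (i - 1)) (e i)"
    using z cx(3) epi_hom[OF image_epi] unfolding is_exact_def by blast
qed

lemma acyclic_image_short_exact: "short_exact C (Im i) (G (i + 1)) (Im (i + 1)) (k i) (e (i + 1))"
  unfolding short_exact_def is_exact_def
proof (intro conjI allI impI image image_mono image_epi complexD(1)[OF complex])
  note cx = complexD[OF complex]
  show "k i \<in> hom (Im i) (G (i + 1))" "e (i + 1) \<in> hom (G (i + 1)) (Im (i + 1))"
    using mono_hom[OF image_mono] epi_hom[OF image_epi] .
  have "(e (i + 1) \<cdot> k i) \<cdot> e i = \<zero>\<^bsub>G i,Im (i + 1)\<^esub>"
    using cokernelD(4)[OF acyclic_image_cokernel[of "i + 1"]]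
      comp_assoc[OF cx(1) image cx(1) image epi_hom[OF image_epi] mono_hom[OF image_mono] epi_hom[OF image_epi]]
      image_factor by simp
  then show "e (i + 1) \<cdot> k i = \<zero>\<^bsub>Im i,Im (i + 1)\<^esub>"
    using epi_cancel_zero[OF cx(1) image image image_epi comp_closed[OF image cx(1) image mono_hom epi_hom]]
      image_mono image_epi by blast
  fix K kk Q qq
  assume "is_kernel C (G (i + 1)) (Im (i + 1)) (e (i + 1)) K kk \<and> is_cokernel C (Im i) (G (i + 1)) (k i) Q qq"
  then have "is_kernel C (G (i + 1)) (G (i + 1 + 1)) (k (i + 1) \<cdot> e (i + 1)) K kk"
    and "is_cokernel C (G i) (G (i + 1)) (k i \<cdot> e i) Q qq"
    using kernel_comp_mono[OF cx(1) image cx(1) _ image_mono] cokernel_comp_epi[OF cx(1) image cx(1) _ image_epi]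
    by blast+
  moreover have "is_exact C (G i) (G (i + 1)) (G (i + 1 + 1)) (k i \<cdot> e i) (k (i + 1) \<cdot> e (i + 1))"
    using acyclic unfolding acyclic_cx_def image_factor by (metis add_diff_cancel_right')
  ultimately show "qq \<cdot> kk = \<zero>\<^bsub>K,Q\<^esub>"
    unfolding is_exact_def by blast
qed

lemma acyclic_images_in_resolving:
  assumes res: "resolving C S" and bounded: "upper_bounded C G" and G_in_S: "\<And>i. G i \<in> S"
  shows "Im i \<in> S"
proof -
  obtain n where n: "\<And>i. i \<ge> n \<Longrightarrow> is_zero_obj C (G i)"
    using bounded unfolding upper_bounded_def by blast
  have proj: "\<And>P. is_projective C P \<Longrightarrow> P \<in> S"
    and kernel: "\<And>A B D f g. short_exact C A B D f g \<Longrightarrow> B \<in> S \<Longrightarrow> D \<in> S \<Longrightarrow> A \<in> S"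
    using res unfolding resolving_def by blast+
  have top: "Im i \<in> S" if "i \<ge> n - 1" for i
    using that n[of "i + 1"] mono_into_zero_obj[OF image _ image_mono] zero_obj_projective proj by simp
  show ?thesis
  proof (cases "i \<ge> n - 1")
    case False
    then have "i \<le> n - 1" by simp
    then show ?thesis
    proof (induction rule: int_le_induct)
      case base
      then show ?case using top by simp
    next
      case (step i)
      then show ?case
        using kernel[OF acyclic_image_short_exact[of "i - 1"]] G_in_S by simp
    qed
  qed (use top in blast)
qed

end

lemma acyclic_cocycle_extends:
  assumes res: "resolving C S" and complex: "is_complex C G dG" and bounded: "upper_bounded C G"
    and acyclic: "acyclic_cx C G dG" and G_in_S: "\<And>i. G i \<in> S" and Y: "injective_in C S Y"
    and h: "h \<in> hom (G j) Y" and cocycle: "h \<cdot> dG (j - 1) = \<zero>\<^bsub>G (j - 1),Y\<^esub>"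
  shows "\<exists>b\<in>hom (G (j + 1)) Y. b \<cdot> dG j = h"
proof -
  note cx = complexD[OF complex]
  have "\<forall>i. \<exists>I m e. I \<in> Ob C \<and> is_mono C I (G (i + 1)) m \<and> is_epi C (G i) I e \<and> dG i = m \<cdot> e"
    using image_factorization[OF cx(1,1,2)] by blast
  then obtain Im k e where image: "\<And>i. Im i \<in> Ob C" and image_mono: "\<And>i. is_mono C (Im i) (G (i + 1)) (k i)"
    and image_epi: "\<And>i. is_epi C (G i) (Im i) (e i)" and image_factor: "\<And>i. dG i = k i \<cdot> e i"
    by metis
  note images = complex acyclic image image_mono image_epi image_factor
  note image_cokernel = acyclic_image_cokernel[where Im = Im and k = k and e = e, OF images]
    and image_short_exact = acyclic_image_short_exact[where Im = Im and k = k and e = e, OF images]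
    and image_in_S = acyclic_images_in_resolving[where Im = Im and k = k and e = e, OF images res bounded G_in_S]
  have Yo: "Y \<in> Ob C" using Y res unfolding injective_in_def resolving_def by blast
  obtain h' where h': "h' \<in> hom (Im j) Y" "h' \<cdot> e j = h"
    using cokernel_factor[OF image_cokernel Yo h cocycle] by blast
  have "ext1_zero C (Im (j + 1)) Y" using Y image_in_S unfolding injective_in_def by blast
  then obtain b where b: "b \<in> hom (G (j + 1)) Y" "b \<cdot> k j = h'"
    using ext1_zero_extend_along_mono[OF image_short_exact Yo _ h'(1)] by blast
  have "b \<cdot> dG j = h"
    using image_factor comp_assoc[OF cx(1) image cx(1) Yo epi_hom[OF image_epi] mono_hom[OF image_mono] b(1)] b(2) h'(2)
    by simp
  then show ?thesis using b(1) by blast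
qed

end

theorem lemma6p4:
  fixes C :: "('o, 'm) cat" and S :: "'o set"
    and G :: "int \<Rightarrow> 'o" and dG :: "int \<Rightarrow> 'm"
    and I :: "int \<Rightarrow> 'o" and dI :: "int \<Rightarrow> 'm"
  assumes "is_abelian C" and "enough_projectives C" and "resolving C S"
    and "is_complex C G dG" and "upper_bounded C G" and "acyclic_cx C G dG"
    and "\<forall>i. G i \<in> S"
    and "is_complex C I dI" and "bounded_cx C I"
    and "\<forall>i. injective_in C S (I i)"
  shows "homK_zero C G dG I dI"
  unfolding homK_zero_def
proof (intro allI impI)
  interpret abelian_cat C by unfold_locales (fact assms(1))
  obtain m where vanish: "\<And>i. i \<le> m \<Longrightarrow> is_zero_obj C (I i)"
    using assms(9) unfolding bounded_cx_def by blast
  fix f assume "chain_map C G dG I dI f"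
  then show "null_homotopic C G dG I dI f"
    using null_homotopic_if_cocycles_extend[OF assms(4,8) _ vanish]
      acyclic_cocycle_extends[OF assms(3-6)] assms(7,10) by blast
qed

end
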